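(* In the setting described in the context, there is a positive constant $C_2=C_2(d,\lambda,\gamma,r_0)$ such that for all $n\in\mathbb{N}_\infty$, $s\in[0,1]$ and $y\in\mathbb{R}^d$, $$\|\nabla a^n\|_{\infty,\gamma}\le C_2\qquad\text{and}\qquad|a^n_s(y)|\le C_2\Big(1+\sup_{t\in[0,1]}\|b_t\|_\infty\Big).$$ Moreover, for each $t\in[0,1]$, $y\in\mathbb{R}^d$ and $j=0,1$, $\lim_{n\to\infty}\nabla^j_ya^n_t(y)=\nabla^j_ya^\infty_t(y)$.
   Context: Setting. $Z$ is a Lévy process in $\mathbb{R}^d$ with Lévy measure $\nu$, $N(\mathrm{d}t,\mathrm{d}z)$ its jump measure and $\tilde N(\mathrm{d}t,\mathrm{d}z)=N(\mathrm{d}t,\mathrm{d}z)-\mathrm{d}t\,\nu(\mathrm{d}z)$; for each $r>0$ there is $\eta_r\in\mathbb{R}^d$ with $Z_t=\int_0^t\int_{|z|<r}z\tilde N(\mathrm{d}s,\mathrm{d}z)+\int_0^t\int_{|z|\ge r}zN(\mathrm{d}s,\mathrm{d}z)+\eta_rt$. Let $\gamma\in(0,1)$ and $\lambda\ge0$; $b:[0,1]\times\mathbb{R}^d\to\mathbb{R}^d$ bounded Borel, $b^n_t=\varrho_n*b_t$ ($n\in\mathbb{N}$, $\varrho_n(x)=n^d\varrho(nx)$, $\varrho\ge0$ smooth compactly supported with $\int\varrho=1$), $b^\infty=b$, $\mathbb{N}_\infty=\mathbb{N}\cup\{\infty\}$. For $n\in\mathbb{N}_\infty$, $u^n:[0,1]\times\mathbb{R}^d\to\mathbb{R}^d$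 is the solution (constructed in the paper) of $\partial_tu^n+(\mathscr{L}_{\nu,\eta}-\lambda)u^n+b^n\cdot\nabla u^n+b^n=0$, $u^n_1=0$, where $\mathscr{L}_{\nu,\eta}$ is the generator of $Z$; it is $C^1$ in $x$ and satisfies $\sup_t\|u^n_t\|_\infty\le\sup_t\|b_t\|_\infty$; the sequence is such that (b) $\lim_{n}\sup_{t}\sup_{|x|\le R}|\nabla^ju^n_t-\nabla^ju^\infty_t|(x)=0$ for $R>0$, $j=0,1$, and $\lambda$ is such that (a) $\|\nabla u^n_t\|_\infty+[\nabla u^n_t]_\gamma\le\frac12$ for all $n\in\mathbb{N}_\infty$, $t\in[0,1]$. $\Phi^n_t(x)=x+u^n_t(x)$ (a $C^1$-diffeomorphism with inverse $(\Phi^n_t)^{-1}$), $g^n_s(y,z)=\Phi^n_s((\Phi^n_s)^{-1}(y)+z)-y$. Let $C_0>0$ be a constant with $\|\nabla_yg^n_s(\cdot,z)\|_\infty\le C_0(1\wedge|z|^\gamma)$ for all $n,s,z$, and fix $r_0\in(0,1)$ with $C_0r_0^\gamma+3r_0/2<1$. Define $$a^n_s(y):=\eta_{r_0}+\lambda u^n_s\big((\Phi^n_s)^{-1}(y)\big)-\int_{|z|\ge r_0}\Big(u^n_s\big((\Phi^n_s)^{-1}(y)+z\big)-u^n_s\big((\Phi^n_s)^{-1}(y)\big)\Big)\nu(\mathrm{d}z).$$ Notation: $[h]_\beta=\sup_{x\ne y}|h(x)-h(y)|/|x-y|^\beta$, $\|h\|_\beta=\|h\|_\infty+[h]_\beta$,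 $\|\nabla a^n\|_{\infty,\gamma}=\sup_s\|\nabla a^n_s\|_\gamma$. *)

theory Defs
  imports "HOL-Analysis.Analysis" "HOL-Library.Extended_Nat"
begin

definition grad :: "('a::real_normed_vector \<Rightarrow> 'b::real_normed_vector) \<Rightarrow> 'a \<Rightarrow> 'a \<Rightarrow>\<^sub>L 'b" where
  "grad f x = Blinfun (frechet_derivative f (at x))"

definition holder_norm_le :: "real \<Rightarrow> ('a::metric_space \<Rightarrow> 'b::real_normed_vector) \<Rightarrow> real \<Rightarrow> bool" where
  "holder_norm_le g f C \<longleftrightarrow>
     (\<exists>K1 K2. K1 + K2 \<le> C \<and> (\<forall>x. norm (f x) \<le> K1) \<and>
        (\<forall>x y. norm (f x - f y) \<le> K2 * dist x y powr g))"

definition levy_measure :: "'a::euclidean_space measure \<Rightarrow> bool" where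
  "levy_measure \<nu> \<longleftrightarrow> sets \<nu> = sets borel \<and> emeasure \<nu> {0} = 0 \<and>
     (\<integral>\<^sup>+ z. ennreal (min 1 (norm z ^ 2)) \<partial>\<nu>) < \<infinity>"

text \<open>Phi^n_t(x) = x + u^n_t(x); the index n ranges over enat (\<infinity> = the limit case).\<close>
definition Phi :: "(enat \<Rightarrow> real \<Rightarrow> 'a \<Rightarrow> 'a::real_normed_vector) \<Rightarrow> enat \<Rightarrow> real \<Rightarrow> 'a \<Rightarrow> 'a" where
  "Phi u n t x = x + u n t x"

definition gfun :: "(enat \<Rightarrow> real \<Rightarrow> 'a \<Rightarrow> 'a::real_normed_vector) \<Rightarrow> enat \<Rightarrow> real \<Rightarrow> 'a \<Rightarrow> 'a \<Rightarrow> 'a" where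
  "gfun u n s y z = Phi u n s (inv (Phi u n s) y + z) - y"

definition acoef :: "'a measure \<Rightarrow> 'a \<Rightarrow> real \<Rightarrow> real \<Rightarrow> (enat \<Rightarrow> real \<Rightarrow> 'a \<Rightarrow> 'a::euclidean_space)
    \<Rightarrow> enat \<Rightarrow> real \<Rightarrow> 'a \<Rightarrow> 'a" where
  "acoef \<nu> \<eta> lam r0 u n s y =
     \<eta> + lam *\<^sub>R u n s (inv (Phi u n s) y)
     - (LINT z:{z. r0 \<le> norm z}|\<nu>. u n s (inv (Phi u n s) y + z) - u n s (inv (Phi u n s) y))"

end

theory Submission
  imports Defs
begin

text \<open>Since \<open>\<parallel>\<nabla>u\<parallel> \<le> 1/2\<close>, the map \<open>\<Phi> = id + u\<close> is a bi-Lipschitz diffeomorphism whose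
  inverse \<open>\<psi>\<close> is 2-Lipschitz with derivative \<open>(I + \<nabla>u(\<psi> y))\<^sup>-\<^sup>1\<close>, of norm at most 2 and
  Hoelder in \<open>y\<close>, since \<open>(I + B)\<^sup>-\<^sup>1 - (I + B')\<^sup>-\<^sup>1\<close> is bounded by \<open>4 \<parallel>B - B'\<parallel>\<close>.
  The set \<open>{|z| \<ge> r\<^sub>0}\<close> has finite \<open>\<nu>\<close>-mass, so the large-jump integral
  \<open>G(x) = \<integral> u(x + z) - u(x) d\<nu>\<close> is \<open>C\<^sup>1\<^sup>,\<^sup>\<gamma>\<close> with derivative the integral of the increments
  of \<open>\<nabla>u\<close>. As \<open>a = \<eta> + (\<lambda>u - G) \<circ> \<psi>\<close>, the chain rule gives bounds depending only on
  \<open>\<lambda>\<close>, \<open>\<eta>\<close> and \<open>\<nu>{|z| \<ge> r\<^sub>0}\<close>. For the limit, \<open>\<psi>\<^sup>n(y) \<rightarrow> \<psi>\<^sup>\<infinity>(y)\<close> by the contraction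
  estimate, after which dominated convergence applies, for the gradient one direction at a time.\<close>

section \<open>Inverting the identity plus a contraction\<close>

definition id_plus_inv :: "('a::plus \<Rightarrow> 'a) \<Rightarrow> 'a \<Rightarrow> 'a" where
  "id_plus_inv f = inv (\<lambda>x. x + f x)"

locale half_contraction =
  fixes f :: "'a::banach \<Rightarrow> 'a"
  assumes half_lipschitz: "norm (f x - f y) \<le> 1/2 * norm (x - y)"
begin

lemma inj_id_plus: "inj (\<lambda>x. x + f x)"
proof (rule injI)
  fix x y assume "x + f x = y + f y"
  then have "x - y = f y - f x" by (simp add: algebra_simps)
  then have "norm (x - y) = norm (f y - f x)" by simp
  also have "\<dots> \<le> 1/2 * norm (x - y)" using half_lipschitz[of y x] by (simp add: norm_minus_commute)
  finally show "x = y" by simp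
qed

text \<open>Surjectivity is Banach's fixed point theorem for the contraction \<open>x \<mapsto> y - f x\<close>.\<close>

lemma surj_id_plus: "surj (\<lambda>x. x + f x)"
proof -
  have "\<exists>x. y = x + f x" for y
  proof -
    have "\<forall>x x'. dist (y - f x) (y - f x') \<le> 1/2 * dist x x'"
      using half_lipschitz by (simp add: dist_norm norm_minus_commute)
    then obtain x where "y - f x = x" using banach_fix_type[of "1/2" "\<lambda>x. y - f x"] by auto
    then show ?thesis by (metis diff_add_cancel)
  qed
  then show ?thesis by (simp add: surj_def)
qed

lemma id_plus_inv_right: "id_plus_inv f y + f (id_plus_inv f y) = y"
  using surj_f_inv_f[OF surj_id_plus, of y] unfolding id_plus_inv_def by simp

lemma id_plus_inv_left: "id_plus_inv f (x + f x) = x"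
  using inv_f_f[OF inj_id_plus] unfolding id_plus_inv_def by simp

lemma id_plus_inv_lipschitz: "norm (id_plus_inv f y - id_plus_inv f y') \<le> 2 * norm (y - y')"
proof -
  let ?x = "id_plus_inv f y" and ?x' = "id_plus_inv f y'"
  have "?x - ?x' = (y - y') - (f ?x - f ?x')"
    using id_plus_inv_right[of y] id_plus_inv_right[of y'] by (simp add: algebra_simps)
  then have "norm (?x - ?x') \<le> norm (y - y') + 1/2 * norm (?x - ?x')"
    using half_lipschitz[of ?x ?x'] norm_triangle_ineq4[of "y - y'" "f ?x - f ?x'"] by simp
  then show ?thesis by simp
qed

lemma continuous_id_plus_inv: "continuous (at y) (id_plus_inv f)"
proof -
  have "2-lipschitz_on UNIV (id_plus_inv f)"
    using id_plus_inv_lipschitz by (simp add: lipschitz_on_def dist_norm)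
  then show ?thesis
    using lipschitz_on_continuous_on continuous_on_eq_continuous_at by blast
qed

end

lemma half_contraction_blinfun:
  assumes "norm B \<le> 1/2"
  shows "half_contraction (blinfun_apply B)"
proof
  fix x y
  have "norm (blinfun_apply B x - blinfun_apply B y) \<le> norm B * norm (x - y)"
    by (metis blinfun.diff_right norm_blinfun)
  also have "\<dots> \<le> 1/2 * norm (x - y)" using assms by (intro mult_right_mono) auto
  finally show "norm (blinfun_apply B x - blinfun_apply B y) \<le> 1/2 * norm (x - y)" .
qed

context
  fixes B :: "'a::euclidean_space \<Rightarrow>\<^sub>L 'a"
  assumes norm_B: "norm B \<le> 1/2"
begin

interpretation half_contraction "blinfun_apply B"
  by (rule half_contraction_blinfun[OF norm_B])

lemma bounded_linear_id_plus_inv_blinfun: "bounded_linear (id_plus_inv (blinfun_apply B))"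
  unfolding id_plus_inv_def
  by (intro inj_linear_imp_inv_bounded_linear inj_id_plus bounded_linear_add
      bounded_linear_ident blinfun.bounded_linear_right)

lemma norm_id_plus_inv_blinfun_le: "norm (id_plus_inv (blinfun_apply B) h) \<le> 2 * norm h"
  using id_plus_inv_lipschitz[of h 0] id_plus_inv_left[of 0] by simp

end

lemma id_plus_inv_blinfun_diff:
  fixes B B' :: "'a::euclidean_space \<Rightarrow>\<^sub>L 'a"
  assumes B: "norm B \<le> 1/2" and B': "norm B' \<le> 1/2"
  shows "norm (id_plus_inv (blinfun_apply B) h - id_plus_inv (blinfun_apply B') h)
    \<le> 4 * norm (B - B') * norm h"
proof -
  interpret B: half_contraction "blinfun_apply B" by (rule half_contraction_blinfun[OF B])
  interpret B': half_contraction "blinfun_apply B'" by (rule half_contraction_blinfun[OF B'])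
  define k where "k = id_plus_inv (blinfun_apply B) h"
  define k' where "k' = id_plus_inv (blinfun_apply B') h"
  have "k + blinfun_apply B k = k' + blinfun_apply B' k'"
    using B.id_plus_inv_right[of h] B'.id_plus_inv_right[of h] unfolding k_def k'_def by simp
  then have "(k - k') + blinfun_apply B (k - k') = blinfun_apply (B' - B) k'"
    by (simp add: algebra_simps blinfun.diff_right blinfun.diff_left)
  then have "norm (k - k') = norm (id_plus_inv (blinfun_apply B) (blinfun_apply (B' - B) k'))"
    using B.id_plus_inv_left[of "k - k'"] by simp
  also have "\<dots> \<le> 2 * (norm (B' - B) * norm k')"
    using norm_id_plus_inv_blinfun_le[OF B] norm_blinfun order_trans mult_left_mono
    by (smt (verit))
  also have "\<dots> \<le> 2 * (norm (B' - B) * (2 * norm h))"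
    using norm_id_plus_inv_blinfun_le[OF B', of h] unfolding k'_def
    by (intro mult_left_mono) auto
  finally show ?thesis unfolding k_def k'_def by (simp add: norm_minus_commute)
qed

section \<open>Small \<open>C\<^sup>1\<^sup>,\<^sup>\<gamma>\<close> perturbations of the identity\<close>

locale small_C1_holder =
  fixes \<gamma> :: real and u :: "'a::euclidean_space \<Rightarrow> 'a"
  assumes exponent_pos: "0 < \<gamma>" and exponent_le_1: "\<gamma> \<le> 1"
    and has_derivative_grad: "(u has_derivative blinfun_apply (grad u x)) (at x)"
    and continuous_on_grad: "continuous_on UNIV (grad u)"
    and norm_grad_le: "norm (grad u x) \<le> 1/2"
    and grad_holder: "norm (grad u x - grad u y) \<le> 1/2 * dist x y powr \<gamma>"
begin

lemma half_contraction: "half_contraction u"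
proof
  fix x y
  show "norm (u x - u y) \<le> 1/2 * norm (x - y)"
    using has_derivative_grad norm_grad_le
    by (intro differentiable_bound[of UNIV]) (auto simp: norm_blinfun.rep_eq[symmetric])
qed

sublocale half_contraction u
  by (rule half_contraction)

lemma continuous_on: "continuous_on UNIV u"
  using has_derivative_grad has_derivative_continuous continuous_at_imp_continuous_on by blast

lemma has_derivative_id_plus_inv:
  "(id_plus_inv u has_derivative id_plus_inv (blinfun_apply (grad u (id_plus_inv u y)))) (at y)"
proof (rule has_derivative_inverse_basic[where f="\<lambda>x. x + u x" and T=UNIV])
  let ?B = "grad u (id_plus_inv u y)"
  interpret B: half_contraction "blinfun_apply ?B"
    by (rule half_contraction_blinfun[OF norm_grad_le])
  show "((\<lambda>x. x + u x) has_derivative (\<lambda>h. h + blinfun_apply ?B h)) (at (id_plus_inv u y))"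
    using has_derivative_grad by (intro derivative_intros) auto
  show "bounded_linear (id_plus_inv (blinfun_apply ?B))"
    by (rule bounded_linear_id_plus_inv_blinfun[OF norm_grad_le])
  show "id_plus_inv (blinfun_apply ?B) \<circ> (\<lambda>h. h + blinfun_apply ?B h) = id"
    using B.id_plus_inv_left by (auto simp: fun_eq_iff)
qed (use continuous_id_plus_inv id_plus_inv_right in auto)

lemma continuous_on_shift: "continuous_on UNIV (\<lambda>z. u (x + z))"
  by (rule continuous_on_compose2[OF continuous_on]) (auto intro: continuous_intros)

lemma continuous_on_grad_shift: "continuous_on UNIV (\<lambda>z. grad u (x + z))"
  by (rule continuous_on_compose2[OF continuous_on_grad]) (auto intro: continuous_intros)

text \<open>Since \<open>\<nabla>u\<close> is \<open>\<gamma>\<close>-Hoelder, the increment \<open>u(\<cdot> + z) - u\<close> is linearized at \<open>x\<close>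
  with an error of order \<open>|y - x|\<close> to the power \<open>1 + \<gamma>\<close>, uniformly in the jump \<open>z\<close>.\<close>

lemma second_difference_linearization:
  "norm (u (y + z) - u y - (u (x + z) - u x)
      - (blinfun_apply (grad u (x + z)) (y - x) - blinfun_apply (grad u x) (y - x)))
    \<le> norm (y - x) powr \<gamma> * norm (y - x)"
proof -
  define \<phi> where "\<phi> w = u (w + z) - u w
      - (blinfun_apply (grad u (x + z)) w - blinfun_apply (grad u x) w)" for w
  define D where "D w = grad u (w + z) - grad u w - (grad u (x + z) - grad u x)" for w
  have "(\<phi> has_derivative blinfun_apply (D w)) (at w within closed_segment x y)" for w
  proof -
    have "((\<lambda>w. u (w + z)) has_derivative blinfun_apply (grad u (w + z))) (at w)"
      using has_derivative_compose[OF has_derivative_add_const[OF has_derivative_ident]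
          has_derivative_grad] by simp
    then have "(\<phi> has_derivative (\<lambda>h. blinfun_apply (grad u (w + z)) h - blinfun_apply (grad u w) h
        - (blinfun_apply (grad u (x + z)) h - blinfun_apply (grad u x) h))) (at w)"
      unfolding \<phi>_def
      by (intro derivative_intros has_derivative_grad bounded_linear_imp_has_derivative
          blinfun.bounded_linear_right) auto
    moreover have "blinfun_apply (D w) = (\<lambda>h. blinfun_apply (grad u (w + z)) h
        - blinfun_apply (grad u w) h - (blinfun_apply (grad u (x + z)) h - blinfun_apply (grad u x) h))"
      by (simp add: D_def fun_eq_iff blinfun.diff_left)
    ultimately show ?thesis by (simp add: has_derivative_at_withinI)
  qed
  moreover have "onorm (blinfun_apply (D w)) \<le> norm (y - x) powr \<gamma>" if "w \<in> closed_segment x y" for w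
  proof -
    have "D w = (grad u (w + z) - grad u (x + z)) - (grad u w - grad u x)"
      unfolding D_def by (simp add: algebra_simps)
    then have "norm (D w) \<le> norm (grad u (w + z) - grad u (x + z)) + norm (grad u w - grad u x)"
      using norm_triangle_ineq4 by metis
    also have "\<dots> \<le> dist w x powr \<gamma>"
      using grad_holder[of "w + z" "x + z"] grad_holder[of w x] by (simp add: dist_norm)
    also have "\<dots> \<le> norm (y - x) powr \<gamma>"
      using segment_bound1[OF that] exponent_pos by (intro powr_mono2) (auto simp: dist_norm)
    finally show ?thesis by (simp add: norm_blinfun.rep_eq)
  qed
  ultimately have "norm (\<phi> y - \<phi> x) \<le> norm (y - x) powr \<gamma> * norm (y - x)"
    by (intro differentiable_bound[OF convex_closed_segment]) auto
  then show ?thesis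
    unfolding \<phi>_def by (simp add: blinfun.diff_right algebra_simps)
qed

end

lemma small_C1_holderI:
  fixes u :: "'a::euclidean_space \<Rightarrow> 'a"
  assumes "0 < \<gamma>" "\<gamma> \<le> 1" and "\<And>x. u differentiable (at x)" and "continuous_on UNIV (grad u)"
    and "holder_norm_le \<gamma> (grad u) (1/2)"
  shows "small_C1_holder \<gamma> u"
proof
  fix x y :: 'a
  show "(u has_derivative blinfun_apply (grad u x)) (at x)"
    using assms(3) frechet_derivative_works has_derivative_bounded_linear
    unfolding grad_def by (metis bounded_linear_Blinfun_apply)
  obtain K1 K2 where K: "K1 + K2 \<le> 1/2" "\<And>x. norm (grad u x) \<le> K1"
    "\<And>x y. norm (grad u x - grad u y) \<le> K2 * dist x y powr \<gamma>"
    using assms(5) unfolding holder_norm_le_def by blast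
  obtain e :: 'a where "norm e = 1" using norm_Basis nonempty_Basis by blast
  then have "0 \<le> K2" using K(3)[of 0 e] by (simp add: dist_norm) (smt (verit) norm_ge_zero)
  moreover have "0 \<le> K1" using K(2)[of 0] norm_ge_zero order_trans by blast
  ultimately show "norm (grad u x) \<le> 1/2" and "norm (grad u x - grad u y) \<le> 1/2 * dist x y powr \<gamma>"
    using K(2)[of x] K(3)[of x y] K(1) mult_right_mono[of K2 "1/2" "dist x y powr \<gamma>"] by auto
qed (use assms in auto)

lemma holder_norm_le_mono: "holder_norm_le \<gamma> f C \<Longrightarrow> C \<le> C' \<Longrightarrow> holder_norm_le \<gamma> f C'"
  unfolding holder_norm_le_def by (meson order_trans)

section \<open>Integrals over a set of finite measure\<close>

locale finite_set_measure =
  fixes \<nu> :: "'a::euclidean_space measure" and A :: "'a set"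
  assumes sets_eq_borel: "sets \<nu> = sets borel" and set_borel: "A \<in> sets borel"
    and emeasure_finite: "emeasure \<nu> A < \<infinity>"
begin

lemma set_in_sets: "A \<in> sets \<nu>"
  using sets_eq_borel set_borel by simp

lemma borel_measurable_of_borel: "f \<in> borel_measurable borel \<Longrightarrow> f \<in> borel_measurable \<nu>"
  using measurable_cong_sets[OF sets_eq_borel refl] by blast

lemma set_integrable_boundedI:
  fixes f :: "'a \<Rightarrow> 'b::{banach,second_countable_topology}"
  assumes "f \<in> borel_measurable borel" and "\<And>z. z \<in> A \<Longrightarrow> norm (f z) \<le> c"
  shows "set_integrable \<nu> A f"
  unfolding set_integrable_def
proof (rule Bochner_Integration.integrable_bound)
  show "integrable \<nu> (\<lambda>x. indicator A x * c)"
    using integrable_real_indicator[OF set_in_sets emeasure_finite] by simp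
  show "(\<lambda>x. indicator A x *\<^sub>R f x) \<in> borel_measurable \<nu>"
    using borel_measurable_of_borel[OF assms(1)] set_in_sets by measurable
  show "AE x in \<nu>. norm (indicator A x *\<^sub>R f x) \<le> norm (indicator A x * c)"
    using assms(2) by (auto simp: indicator_def intro: order_trans[OF _ abs_ge_self])
qed

lemma norm_set_integral_le:
  fixes f :: "'a \<Rightarrow> 'b::{banach,second_countable_topology}"
  assumes "f \<in> borel_measurable borel" and "\<And>z. z \<in> A \<Longrightarrow> norm (f z) \<le> c" and "0 \<le> c"
  shows "norm (LINT z:A|\<nu>. f z) \<le> c * measure \<nu> A"
proof -
  have "norm (LINT z:A|\<nu>. f z) \<le> (LINT z:A|\<nu>. norm (f z))"
    using assms by (intro set_integral_norm_bound set_integrable_boundedI)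
  also have "\<dots> \<le> (LINT z:A|\<nu>. c)"
    using assms by (intro set_integral_mono set_integrable_boundedI) auto
  also have "\<dots> = c * measure \<nu> A"
    using set_in_sets emeasure_finite by (simp add: set_integral_const)
  finally show ?thesis .
qed

lemma set_integral_dominated_convergence:
  fixes s :: "nat \<Rightarrow> 'a \<Rightarrow> 'b::{banach,second_countable_topology}"
  assumes "f \<in> borel_measurable borel" and "\<And>i. s i \<in> borel_measurable borel"
    and "\<And>z. z \<in> A \<Longrightarrow> (\<lambda>i. s i z) \<longlonglongrightarrow> f z"
    and "\<And>i z. z \<in> A \<Longrightarrow> norm (s i z) \<le> c"
  shows "(\<lambda>i. LINT z:A|\<nu>. s i z) \<longlonglongrightarrow> (LINT z:A|\<nu>. f z)"
  unfolding set_lebesgue_integral_def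
proof (rule integral_dominated_convergence[where w="\<lambda>z. indicator A z * c"])
  show "(\<lambda>x. indicator A x *\<^sub>R f x) \<in> borel_measurable \<nu>"
    using borel_measurable_of_borel[OF assms(1)] set_in_sets by measurable
  show "(\<lambda>x. indicator A x *\<^sub>R s i x) \<in> borel_measurable \<nu>" for i
    using borel_measurable_of_borel[OF assms(2)] set_in_sets by measurable
  show "integrable \<nu> (\<lambda>x. indicator A x * c)"
    using integrable_real_indicator[OF set_in_sets emeasure_finite] by simp
  show "AE x in \<nu>. (\<lambda>i. indicator A x *\<^sub>R s i x) \<longlonglongrightarrow> indicator A x *\<^sub>R f x"
    using assms(3) by (intro AE_I2) (simp add: indicator_def)
  show "AE x in \<nu>. norm (indicator A x *\<^sub>R s i x) \<le> indicator A x * c" for i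
    using assms(4) by (intro AE_I2) (auto simp: indicator_def)
qed

end

lemma finite_set_measure_levy:
  fixes \<nu> :: "'a::euclidean_space measure"
  assumes levy: "levy_measure \<nu>" and "0 < r"
  shows "finite_set_measure \<nu> {z. r \<le> norm z}"
proof
  show sets: "sets \<nu> = sets borel" using levy unfolding levy_measure_def by blast
  show A: "{z::'a. r \<le> norm z} \<in> sets borel" by measurable
  define c where "c = min 1 (r\<^sup>2)"
  have "(\<integral>\<^sup>+ z. ennreal c * indicator {z. r \<le> norm z} z \<partial>\<nu>) \<le> (\<integral>\<^sup>+ z. ennreal (min 1 (norm z ^ 2)) \<partial>\<nu>)"
  proof (rule nn_integral_mono)
    fix z :: 'a
    have "r \<le> norm z \<Longrightarrow> r\<^sup>2 \<le> norm z ^ 2"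
      using \<open>0 < r\<close> by (intro power_mono) auto
    then have "r \<le> norm z \<Longrightarrow> c \<le> min 1 (norm z ^ 2)"
      unfolding c_def by auto
    then show "ennreal c * indicator {z. r \<le> norm z} z \<le> ennreal (min 1 (norm z ^ 2))"
      by (simp add: indicator_def)
  qed
  also have "\<dots> < \<infinity>" using levy unfolding levy_measure_def by blast
  finally have "ennreal c * emeasure \<nu> {z. r \<le> norm z} < \<infinity>"
    using nn_integral_cmult_indicator[of "{z. r \<le> norm z}" \<nu> "ennreal c"] A sets by simp
  moreover have "0 < c" unfolding c_def using \<open>0 < r\<close> by simp
  ultimately show "emeasure \<nu> {z. r \<le> norm z} < \<infinity>"
    by (auto simp: ennreal_mult_less_top)
qed

section \<open>The large-jump integral\<close>

lemma has_derivative_of_holder_remainder: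
  fixes f :: "'a::real_normed_vector \<Rightarrow> 'b::real_normed_vector"
  assumes "bounded_linear L" and "0 \<le> C" and "0 < \<gamma>"
    and remainder: "\<And>y. norm (f y - f x - L (y - x)) \<le> C * norm (y - x) powr \<gamma> * norm (y - x)"
  shows "(f has_derivative L) (at x)"
  unfolding has_derivative_at_alt
proof (intro conjI allI impI assms(1))
  fix e :: real assume "0 < e"
  define d where "d = (e / (C + 1)) powr (1/\<gamma>)"
  have "0 < d" and d: "d powr \<gamma> = e / (C + 1)"
    unfolding d_def using \<open>0 < e\<close> assms(2,3) by (simp_all add: powr_powr)
  have "norm (f y - f x - L (y - x)) \<le> e * norm (y - x)" if "norm (y - x) < d" for y
  proof -
    have "norm (y - x) powr \<gamma> \<le> e / (C + 1)"
      using powr_less_mono2[OF assms(3) norm_ge_zero that] d by simp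
    then have "C * norm (y - x) powr \<gamma> \<le> C * (e / (C + 1))"
      using assms(2) by (intro mult_left_mono)
    also have "\<dots> \<le> e"
      using assms(2) \<open>0 < e\<close> by (simp add: field_simps)
    finally have "C * norm (y - x) powr \<gamma> * norm (y - x) \<le> e * norm (y - x)"
      by (intro mult_right_mono) auto
    then show ?thesis using remainder[of y] by linarith
  qed
  with \<open>0 < d\<close> show "\<exists>d>0. \<forall>y. norm (y - x) < d \<longrightarrow> norm (f y - f x - L (y - x)) \<le> e * norm (y - x)"
    by blast
qed

definition jump_integral :: "'a measure \<Rightarrow> 'a set \<Rightarrow> ('a \<Rightarrow> 'a::euclidean_space) \<Rightarrow> 'a \<Rightarrow> 'a" where
  "jump_integral \<nu> A u x = (LINT z:A|\<nu>. u (x + z) - u x)"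

definition jump_integral_deriv ::
    "'a measure \<Rightarrow> 'a set \<Rightarrow> ('a \<Rightarrow> 'a::euclidean_space) \<Rightarrow> 'a \<Rightarrow> 'a \<Rightarrow> 'a" where
  "jump_integral_deriv \<nu> A u x h =
     (LINT z:A|\<nu>. blinfun_apply (grad u (x + z)) h - blinfun_apply (grad u x) h)"

locale jump_operator = finite_set_measure \<nu> A + small_C1_holder \<gamma> u
  for \<nu> :: "'a::euclidean_space measure" and A \<gamma> and u :: "'a \<Rightarrow> 'a" +
  fixes M :: real
  assumes norm_le_bound: "norm (u x) \<le> M"
begin

lemma bound_nonneg: "0 \<le> M"
  using norm_le_bound[of 0] norm_ge_zero order_trans by blast

lemma borel_measurable_shift: "(\<lambda>z. u (x + z)) \<in> borel_measurable borel"
  by (intro borel_measurable_continuous_onI continuous_on_shift)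

lemma borel_measurable_grad_shift: "(\<lambda>z. blinfun_apply (grad u (x + z)) h) \<in> borel_measurable borel"
  using continuous_on_grad_shift
  by (intro borel_measurable_continuous_onI) (auto intro!: continuous_intros)

lemma norm_increment_le: "norm (u (x + z) - u x) \<le> 2 * M"
  using norm_triangle_ineq4[of "u (x + z)" "u x"] norm_le_bound[of "x + z"] norm_le_bound[of x]
  by linarith

lemma norm_grad_apply_le: "norm (blinfun_apply (grad u x) h) \<le> 1/2 * norm h"
  using norm_blinfun[of "grad u x" h] mult_right_mono[OF norm_grad_le norm_ge_zero, of x h]
  by linarith

lemma norm_grad_increment_le:
  "norm (blinfun_apply (grad u (x + z)) h - blinfun_apply (grad u x) h) \<le> norm h"
  using norm_triangle_ineq4[of "blinfun_apply (grad u (x + z)) h" "blinfun_apply (grad u x) h"]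
    norm_grad_apply_le[of "x + z" h] norm_grad_apply_le[of x h]
  by linarith

lemma set_integrable_increment: "set_integrable \<nu> A (\<lambda>z. u (x + z) - u x)"
  using norm_increment_le borel_measurable_shift by (intro set_integrable_boundedI) auto

lemma set_integrable_grad_increment:
  "set_integrable \<nu> A (\<lambda>z. blinfun_apply (grad u (x + z)) h - blinfun_apply (grad u x) h)"
  using norm_grad_increment_le borel_measurable_grad_shift by (intro set_integrable_boundedI) auto

lemma norm_jump_integral_le: "norm (jump_integral \<nu> A u x) \<le> 2 * M * measure \<nu> A"
  unfolding jump_integral_def
  using norm_increment_le borel_measurable_shift bound_nonneg by (intro norm_set_integral_le) auto

lemma norm_jump_integral_deriv_le: "norm (jump_integral_deriv \<nu> A u x h) \<le> measure \<nu> A * norm h"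
  unfolding jump_integral_deriv_def
  using norm_set_integral_le[OF _ norm_grad_increment_le] borel_measurable_grad_shift
  by (simp add: mult.commute)

lemma bounded_linear_jump_integral_deriv: "bounded_linear (jump_integral_deriv \<nu> A u x)"
proof (rule bounded_linear_intro)
  fix h k
  have "jump_integral_deriv \<nu> A u x (h + k)
    = (LINT z:A|\<nu>. (blinfun_apply (grad u (x + z)) h - blinfun_apply (grad u x) h)
        + (blinfun_apply (grad u (x + z)) k - blinfun_apply (grad u x) k))"
    unfolding jump_integral_deriv_def by (simp add: blinfun.add_right add_diff_add)
  also have "\<dots> = jump_integral_deriv \<nu> A u x h + jump_integral_deriv \<nu> A u x k"
    unfolding jump_integral_deriv_def
    by (rule set_integral_add(2)[OF set_integrable_grad_increment set_integrable_grad_increment])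
  finally show "jump_integral_deriv \<nu> A u x (h + k)
    = jump_integral_deriv \<nu> A u x h + jump_integral_deriv \<nu> A u x k" .
next
  fix r :: real and h
  have "jump_integral_deriv \<nu> A u x (r *\<^sub>R h)
    = (LINT z:A|\<nu>. r *\<^sub>R (blinfun_apply (grad u (x + z)) h - blinfun_apply (grad u x) h))"
    unfolding jump_integral_deriv_def by (simp only: blinfun.scaleR_right scaleR_diff_right)
  then show "jump_integral_deriv \<nu> A u x (r *\<^sub>R h) = r *\<^sub>R jump_integral_deriv \<nu> A u x h"
    unfolding jump_integral_deriv_def by simp
next
  fix h
  show "norm (jump_integral_deriv \<nu> A u x h) \<le> norm h * measure \<nu> A"
    using norm_jump_integral_deriv_le by (simp add: mult.commute)
qed

lemma jump_integral_deriv_holder: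
  "norm (jump_integral_deriv \<nu> A u x h - jump_integral_deriv \<nu> A u x' h)
    \<le> measure \<nu> A * (dist x x' powr \<gamma> * norm h)"
proof -
  have "norm ((blinfun_apply (grad u (x + z)) h - blinfun_apply (grad u x) h)
      - (blinfun_apply (grad u (x' + z)) h - blinfun_apply (grad u x') h)) \<le> dist x x' powr \<gamma> * norm h"
    for z
  proof -
    define D where "D = grad u (x + z) - grad u (x' + z)"
    define E where "E = grad u x - grad u x'"
    have "(blinfun_apply (grad u (x + z)) h - blinfun_apply (grad u x) h)
        - (blinfun_apply (grad u (x' + z)) h - blinfun_apply (grad u x') h)
      = blinfun_apply D h - blinfun_apply E h"
      unfolding D_def E_def by (simp add: blinfun.diff_left algebra_simps)
    then have "norm ((blinfun_apply (grad u (x + z)) h - blinfun_apply (grad u x) h)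
        - (blinfun_apply (grad u (x' + z)) h - blinfun_apply (grad u x') h))
      = norm (blinfun_apply D h - blinfun_apply E h)" by simp
    also have "\<dots> \<le> norm D * norm h + norm E * norm h"
      using norm_triangle_ineq4[of "blinfun_apply D h" "blinfun_apply E h"]
        norm_blinfun[of D h] norm_blinfun[of E h] by linarith
    also have "\<dots> \<le> (1/2 * dist x x' powr \<gamma>) * norm h + (1/2 * dist x x' powr \<gamma>) * norm h"
      using grad_holder[of "x + z" "x' + z"] grad_holder[of x x'] unfolding D_def E_def
      by (intro add_mono mult_right_mono) (auto simp: dist_norm)
    finally show ?thesis by (simp add: mult.commute)
  qed
  then have "norm (LINT z:A|\<nu>. (blinfun_apply (grad u (x + z)) h - blinfun_apply (grad u x) h)
      - (blinfun_apply (grad u (x' + z)) h - blinfun_apply (grad u x') h))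
    \<le> (dist x x' powr \<gamma> * norm h) * measure \<nu> A"
    using borel_measurable_grad_shift by (intro norm_set_integral_le) auto
  then show ?thesis
    unfolding jump_integral_deriv_def
    by (simp add: set_integral_diff(2)[OF set_integrable_grad_increment set_integrable_grad_increment]
        mult.commute)
qed

lemma has_derivative_jump_integral:
  "(jump_integral \<nu> A u has_derivative jump_integral_deriv \<nu> A u x) (at x)"
proof (rule has_derivative_of_holder_remainder[OF bounded_linear_jump_integral_deriv _ exponent_pos])
  fix y
  have "jump_integral \<nu> A u y - jump_integral \<nu> A u x - jump_integral_deriv \<nu> A u x (y - x) =
    (LINT z:A|\<nu>. (u (y + z) - u y) - (u (x + z) - u x)
      - (blinfun_apply (grad u (x + z)) (y - x) - blinfun_apply (grad u x) (y - x)))"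
    unfolding jump_integral_def jump_integral_deriv_def
    by (subst set_integral_diff(2)[OF set_integral_diff(1)[OF set_integrable_increment
          set_integrable_increment] set_integrable_grad_increment])
      (simp add: set_integral_diff(2)[OF set_integrable_increment set_integrable_increment])
  also have "norm \<dots> \<le> (norm (y - x) powr \<gamma> * norm (y - x)) * measure \<nu> A"
    using second_difference_linearization borel_measurable_shift borel_measurable_grad_shift
    by (intro norm_set_integral_le) auto
  finally show "norm (jump_integral \<nu> A u y - jump_integral \<nu> A u x - jump_integral_deriv \<nu> A u x (y - x))
      \<le> measure \<nu> A * norm (y - x) powr \<gamma> * norm (y - x)"
    by (simp add: mult_ac)
qed simp

end

section \<open>The drift coefficient\<close>

definition drift_core :: "'a measure \<Rightarrow> 'a set \<Rightarrow> real \<Rightarrow> ('a \<Rightarrow> 'a::euclidean_space) \<Rightarrow> 'a \<Rightarrow> 'a" where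
  "drift_core \<nu> A lam u x = lam *\<^sub>R u x - jump_integral \<nu> A u x"

definition drift_core_deriv ::
    "'a measure \<Rightarrow> 'a set \<Rightarrow> real \<Rightarrow> ('a \<Rightarrow> 'a::euclidean_space) \<Rightarrow> 'a \<Rightarrow> 'a \<Rightarrow> 'a" where
  "drift_core_deriv \<nu> A lam u x h = lam *\<^sub>R blinfun_apply (grad u x) h - jump_integral_deriv \<nu> A u x h"

definition drift :: "'a measure \<Rightarrow> 'a set \<Rightarrow> 'a \<Rightarrow> real \<Rightarrow> ('a \<Rightarrow> 'a::euclidean_space) \<Rightarrow> 'a \<Rightarrow> 'a" where
  "drift \<nu> A \<eta> lam u y = \<eta> + drift_core \<nu> A lam u (id_plus_inv u y)"

definition drift_deriv ::
    "'a measure \<Rightarrow> 'a set \<Rightarrow> real \<Rightarrow> ('a \<Rightarrow> 'a::euclidean_space) \<Rightarrow> 'a \<Rightarrow> 'a \<Rightarrow> 'a" where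
  "drift_deriv \<nu> A lam u y h =
     drift_core_deriv \<nu> A lam u (id_plus_inv u y) (id_plus_inv (blinfun_apply (grad u (id_plus_inv u y))) h)"

context jump_operator
begin

context
  fixes lam :: real
  assumes lam_nonneg: "0 \<le> lam"
begin

lemma has_derivative_drift_core: "(drift_core \<nu> A lam u has_derivative drift_core_deriv \<nu> A lam u x) (at x)"
  unfolding drift_core_def[abs_def] drift_core_deriv_def[abs_def]
  by (intro derivative_intros has_derivative_grad has_derivative_jump_integral)

lemma bounded_linear_drift_core_deriv: "bounded_linear (drift_core_deriv \<nu> A lam u x)"
  using has_derivative_drift_core by (rule has_derivative_bounded_linear)

lemma norm_drift_core_deriv_le:
  "norm (drift_core_deriv \<nu> A lam u x h) \<le> (lam / 2 + measure \<nu> A) * norm h"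
proof -
  have "norm (drift_core_deriv \<nu> A lam u x h)
      \<le> lam * norm (blinfun_apply (grad u x) h) + norm (jump_integral_deriv \<nu> A u x h)"
    unfolding drift_core_deriv_def
    using lam_nonneg norm_triangle_ineq4[of "lam *\<^sub>R blinfun_apply (grad u x) h"] by simp
  also have "\<dots> \<le> lam * (1/2 * norm h) + measure \<nu> A * norm h"
    using lam_nonneg norm_grad_apply_le norm_jump_integral_deriv_le by (intro add_mono mult_left_mono)
  finally show ?thesis by (simp add: algebra_simps)
qed

lemma drift_core_deriv_holder:
  "norm (drift_core_deriv \<nu> A lam u x h - drift_core_deriv \<nu> A lam u x' h)
    \<le> (lam / 2 + measure \<nu> A) * (dist x x' powr \<gamma> * norm h)"
proof -
  have "drift_core_deriv \<nu> A lam u x h - drift_core_deriv \<nu> A lam u x' h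
    = lam *\<^sub>R blinfun_apply (grad u x - grad u x') h
      - (jump_integral_deriv \<nu> A u x h - jump_integral_deriv \<nu> A u x' h)"
    unfolding drift_core_deriv_def by (simp add: blinfun.diff_left algebra_simps)
  then have "norm (drift_core_deriv \<nu> A lam u x h - drift_core_deriv \<nu> A lam u x' h)
    \<le> lam * norm (blinfun_apply (grad u x - grad u x') h)
      + norm (jump_integral_deriv \<nu> A u x h - jump_integral_deriv \<nu> A u x' h)"
    using lam_nonneg norm_triangle_ineq4[of "lam *\<^sub>R blinfun_apply (grad u x - grad u x') h"] by simp
  also have "\<dots> \<le> lam * (1/2 * (dist x x' powr \<gamma> * norm h)) + measure \<nu> A * (dist x x' powr \<gamma> * norm h)"
  proof (intro add_mono mult_left_mono lam_nonneg jump_integral_deriv_holder)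
    have "norm (blinfun_apply (grad u x - grad u x') h) \<le> norm (grad u x - grad u x') * norm h"
      by (rule norm_blinfun)
    also have "\<dots> \<le> (1/2 * dist x x' powr \<gamma>) * norm h"
      using grad_holder by (intro mult_right_mono) auto
    finally show "norm (blinfun_apply (grad u x - grad u x') h) \<le> 1/2 * (dist x x' powr \<gamma> * norm h)"
      by simp
  qed
  finally show ?thesis by (simp add: algebra_simps)
qed

lemma has_derivative_drift: "(drift \<nu> A \<eta> lam u has_derivative drift_deriv \<nu> A lam u y) (at y)"
proof -
  have "(drift_core \<nu> A lam u \<circ> id_plus_inv u has_derivative drift_deriv \<nu> A lam u y) (at y)"
    using has_derivative_compose[OF has_derivative_id_plus_inv has_derivative_drift_core]
    unfolding drift_deriv_def[abs_def] by (simp add: o_def)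
  then show ?thesis
    unfolding drift_def[abs_def] using has_derivative_add[OF has_derivative_const] by (simp add: o_def)
qed

lemma grad_drift: "blinfun_apply (grad (drift \<nu> A \<eta> lam u) y) = drift_deriv \<nu> A lam u y"
  unfolding grad_def
  using frechet_derivative_at[OF has_derivative_drift, symmetric]
    bounded_linear_Blinfun_apply[OF has_derivative_bounded_linear[OF has_derivative_drift]]
  by simp

lemma norm_drift_deriv_le: "norm (drift_deriv \<nu> A lam u y h) \<le> 2 * (lam / 2 + measure \<nu> A) * norm h"
proof -
  have "norm (drift_deriv \<nu> A lam u y h)
      \<le> (lam / 2 + measure \<nu> A) * norm (id_plus_inv (blinfun_apply (grad u (id_plus_inv u y))) h)"
    unfolding drift_deriv_def by (rule norm_drift_core_deriv_le)
  also have "\<dots> \<le> (lam / 2 + measure \<nu> A) * (2 * norm h)"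
    using norm_id_plus_inv_blinfun_le[OF norm_grad_le] lam_nonneg by (intro mult_left_mono) auto
  finally show ?thesis by (simp only: mult_ac)
qed

text \<open>This is where \<open>\<gamma> \<le> 1\<close> is needed: \<open>2 powr \<gamma> \<le> 2\<close>.\<close>

lemma dist_id_plus_inv_powr_le:
  "dist (id_plus_inv u y) (id_plus_inv u y') powr \<gamma> \<le> 2 * dist y y' powr \<gamma>"
proof -
  have "dist (id_plus_inv u y) (id_plus_inv u y') powr \<gamma> \<le> (2 * dist y y') powr \<gamma>"
    using id_plus_inv_lipschitz exponent_pos by (intro powr_mono2) (auto simp: dist_norm)
  also have "\<dots> = 2 powr \<gamma> * dist y y' powr \<gamma>" by (simp add: powr_mult)
  also have "\<dots> \<le> 2 * dist y y' powr \<gamma>"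
    using powr_mono[of \<gamma> 1 2] exponent_le_1 by (intro mult_right_mono) auto
  finally show ?thesis .
qed

lemma drift_deriv_holder:
  "norm (drift_deriv \<nu> A lam u y h - drift_deriv \<nu> A lam u y' h)
    \<le> 8 * (lam / 2 + measure \<nu> A) * (dist y y' powr \<gamma> * norm h)"
proof -
  define c where "c = lam / 2 + measure \<nu> A"
  have c: "0 \<le> c" unfolding c_def using lam_nonneg by simp
  define x where "x = id_plus_inv u y"
  define x' where "x' = id_plus_inv u y'"
  define p where "p = id_plus_inv (blinfun_apply (grad u x)) h"
  define p' where "p' = id_plus_inv (blinfun_apply (grad u x')) h"
  have "drift_deriv \<nu> A lam u y h - drift_deriv \<nu> A lam u y' h
    = (drift_core_deriv \<nu> A lam u x p - drift_core_deriv \<nu> A lam u x' p)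
      + drift_core_deriv \<nu> A lam u x' (p - p')"
    unfolding drift_deriv_def x_def x'_def p_def p'_def
    using linear_diff[OF bounded_linear.linear[OF bounded_linear_drift_core_deriv]] by simp
  also have "norm \<dots> \<le> c * (dist x x' powr \<gamma> * norm p) + c * norm (p - p')"
    unfolding c_def
    by (rule order_trans[OF norm_triangle_ineq add_mono[OF drift_core_deriv_holder norm_drift_core_deriv_le]])
  also have "\<dots> \<le> c * (dist x x' powr \<gamma> * (2 * norm h)) + c * (4 * (1/2 * dist x x' powr \<gamma>) * norm h)"
  proof (rule add_mono; rule mult_left_mono[OF _ c])
    show "dist x x' powr \<gamma> * norm p \<le> dist x x' powr \<gamma> * (2 * norm h)"
      unfolding p_def using norm_id_plus_inv_blinfun_le[OF norm_grad_le] by (intro mult_left_mono) auto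
    have "norm (p - p') \<le> 4 * norm (grad u x - grad u x') * norm h"
      unfolding p_def p'_def by (rule id_plus_inv_blinfun_diff[OF norm_grad_le norm_grad_le])
    also have "\<dots> \<le> 4 * (1/2 * dist x x' powr \<gamma>) * norm h"
      using grad_holder[of x x'] by (intro mult_right_mono) auto
    finally show "norm (p - p') \<le> 4 * (1/2 * dist x x' powr \<gamma>) * norm h" .
  qed
  also have "\<dots> = 4 * c * (dist x x' powr \<gamma> * norm h)" by (simp add: algebra_simps)
  also have "\<dots> \<le> 4 * c * ((2 * dist y y' powr \<gamma>) * norm h)"
    unfolding x_def x'_def using dist_id_plus_inv_powr_le c by (intro mult_left_mono mult_right_mono) auto
  finally show ?thesis unfolding c_def by (simp add: algebra_simps)
qed

lemma holder_norm_le_grad_drift: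
  "holder_norm_le \<gamma> (grad (drift \<nu> A \<eta> lam u)) (5 * lam + 10 * measure \<nu> A)"
  unfolding holder_norm_le_def
proof (intro exI conjI allI)
  have c: "0 \<le> lam / 2 + measure \<nu> A" using lam_nonneg by simp
  show "norm (grad (drift \<nu> A \<eta> lam u) y) \<le> 2 * (lam / 2 + measure \<nu> A)" for y
    using c norm_drift_deriv_le by (intro norm_blinfun_bound) (auto simp: grad_drift)
  show "norm (grad (drift \<nu> A \<eta> lam u) y - grad (drift \<nu> A \<eta> lam u) y')
      \<le> 8 * (lam / 2 + measure \<nu> A) * dist y y' powr \<gamma>" for y y'
    using c drift_deriv_holder[of y _ y']
    by (intro norm_blinfun_bound) (auto simp: blinfun.diff_left grad_drift mult_ac)
qed (simp add: algebra_simps)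

lemma norm_drift_le: "norm (drift \<nu> A \<eta> lam u y) \<le> norm \<eta> + lam * M + 2 * M * measure \<nu> A"
proof -
  let ?x = "id_plus_inv u y"
  have "norm (drift \<nu> A \<eta> lam u y) \<le> norm \<eta> + lam * norm (u ?x) + norm (jump_integral \<nu> A u ?x)"
    unfolding drift_def drift_core_def
    using norm_triangle_ineq[of \<eta> "lam *\<^sub>R u ?x - jump_integral \<nu> A u ?x"]
      norm_triangle_ineq4[of "lam *\<^sub>R u ?x" "jump_integral \<nu> A u ?x"] lam_nonneg
    by simp
  also have "\<dots> \<le> norm \<eta> + lam * M + 2 * M * measure \<nu> A"
    using lam_nonneg norm_le_bound norm_jump_integral_le by (intro add_mono mult_left_mono) auto
  finally show ?thesis .
qed

end

end

section \<open>Convergence of the drift coefficients\<close>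

lemma tendsto_of_norm_diff_le:
  fixes f :: "nat \<Rightarrow> 'b::real_normed_vector"
  assumes "\<And>n. norm (f n - l) \<le> g n" and "g \<longlonglongrightarrow> 0"
  shows "f \<longlonglongrightarrow> l"
proof -
  have "\<forall>\<^sub>F n in sequentially. norm (f n - l) \<le> g n"
    using assms(1) by simp
  then have "(\<lambda>n. f n - l) \<longlonglongrightarrow> 0"
    using assms(2) by (rule Lim_null_comparison)
  then show ?thesis by (rule LIM_zero_cancel)
qed

lemma tendsto_of_eventually_norm_diff_le:
  fixes f :: "nat \<Rightarrow> 'b::real_normed_vector"
  assumes "\<And>e. 0 < e \<Longrightarrow> \<forall>\<^sub>F n in sequentially. norm (f n - l) \<le> e"
  shows "f \<longlonglongrightarrow> l"
proof (rule tendstoI)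
  fix e :: real assume "0 < e"
  then have "\<forall>\<^sub>F n in sequentially. norm (f n - l) \<le> e / 2" by (intro assms) simp
  then show "\<forall>\<^sub>F n in sequentially. dist (f n) l < e"
    by eventually_elim (use \<open>0 < e\<close> in \<open>simp add: dist_norm\<close>)
qed

context finite_set_measure
begin

context
  fixes \<gamma> M lam :: real and v :: "nat \<Rightarrow> 'a \<Rightarrow> 'a" and w :: "'a \<Rightarrow> 'a" and y :: 'a
  assumes jump_v: "\<And>n. jump_operator \<nu> A \<gamma> (v n) M" and jump_w: "jump_operator \<nu> A \<gamma> w M"
    and lam_nonneg: "0 \<le> lam"
    and tendsto_v: "\<And>x. (\<lambda>n. v n x) \<longlonglongrightarrow> w x"
    and tendsto_grad_v: "\<And>x. (\<lambda>n. grad (v n) x) \<longlonglongrightarrow> grad w x"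
begin

lemma small_C1_holder_seq: "small_C1_holder \<gamma> (v n)" and small_C1_holder_lim: "small_C1_holder \<gamma> w"
  using jump_v jump_w by (simp_all add: jump_operator_def)

lemma half_contraction_seq: "half_contraction (v n)"
  using small_C1_holder_seq by (rule small_C1_holder.half_contraction)

lemma tendsto_id_plus_inv: "(\<lambda>n. id_plus_inv (v n) y) \<longlonglongrightarrow> id_plus_inv w y"
proof (rule tendsto_of_norm_diff_le)
  let ?xn = "\<lambda>n. id_plus_inv (v n) y" and ?x = "id_plus_inv w y"
  show "norm (?xn n - ?x) \<le> 2 * norm (v n ?x - w ?x)" for n
  proof -
    have "?xn n - ?x = (w ?x - v n ?x) + (v n ?x - v n (?xn n))"
      using half_contraction.id_plus_inv_right[OF half_contraction_seq, of n y]
        half_contraction.id_plus_inv_right[OF small_C1_holder.half_contraction[OF small_C1_holder_lim], of y]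
      by (simp add: algebra_simps)
    then have "norm (?xn n - ?x) \<le> norm (v n ?x - w ?x) + norm (v n ?x - v n (?xn n))"
      using norm_triangle_ineq[of "w ?x - v n ?x" "v n ?x - v n (?xn n)"]
        norm_minus_commute[of "w ?x" "v n ?x"] by simp
    moreover have "norm (v n ?x - v n (?xn n)) \<le> 1/2 * norm (?xn n - ?x)"
      using half_contraction.half_lipschitz[OF half_contraction_seq, of n ?x "?xn n"] by (simp add: norm_minus_commute)
    ultimately show ?thesis by linarith
  qed
  show "(\<lambda>n. 2 * norm (v n ?x - w ?x)) \<longlonglongrightarrow> 0"
    using tendsto_v[of ?x] by (intro tendsto_mult_right_zero tendsto_norm_zero LIM_zero)
qed

lemma tendsto_shift: "(\<lambda>n. v n (id_plus_inv (v n) y + z)) \<longlonglongrightarrow> w (id_plus_inv w y + z)"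
proof (rule tendsto_of_norm_diff_le)
  let ?xn = "\<lambda>n. id_plus_inv (v n) y" and ?x = "id_plus_inv w y"
  show "norm (v n (?xn n + z) - w (?x + z))
    \<le> 1/2 * norm (?xn n - ?x) + norm (v n (?x + z) - w (?x + z))" for n
    using norm_triangle_ineq[of "v n (?xn n + z) - v n (?x + z)" "v n (?x + z) - w (?x + z)"]
      half_contraction.half_lipschitz[OF half_contraction_seq, of n "?xn n + z" "?x + z"]
    by simp
  have "(\<lambda>n. norm (?xn n - ?x)) \<longlonglongrightarrow> 0"
    by (intro tendsto_norm_zero LIM_zero tendsto_id_plus_inv)
  moreover have "(\<lambda>n. norm (v n (?x + z) - w (?x + z))) \<longlonglongrightarrow> 0"
    by (intro tendsto_norm_zero LIM_zero tendsto_v)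
  ultimately show "(\<lambda>n. 1/2 * norm (?xn n - ?x) + norm (v n (?x + z) - w (?x + z))) \<longlonglongrightarrow> 0"
    by (rule tendsto_add_zero[OF tendsto_mult_right_zero])
qed

lemma tendsto_grad_shift:
  "(\<lambda>n. grad (v n) (id_plus_inv (v n) y + z)) \<longlonglongrightarrow> grad w (id_plus_inv w y + z)"
proof (rule tendsto_of_norm_diff_le)
  let ?xn = "\<lambda>n. id_plus_inv (v n) y" and ?x = "id_plus_inv w y"
  show "norm (grad (v n) (?xn n + z) - grad w (?x + z))
    \<le> 1/2 * norm (?xn n - ?x) powr \<gamma> + norm (grad (v n) (?x + z) - grad w (?x + z))" for n
    using norm_triangle_ineq[of "grad (v n) (?xn n + z) - grad (v n) (?x + z)"
        "grad (v n) (?x + z) - grad w (?x + z)"]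
      small_C1_holder.grad_holder[OF small_C1_holder_seq, of n "?xn n + z" "?x + z"]
    by (simp add: dist_norm)
  have "(\<lambda>n. norm (?xn n - ?x) powr \<gamma>) \<longlonglongrightarrow> 0"
    using small_C1_holder.exponent_pos[OF small_C1_holder_lim]
    by (intro tendsto_zero_powrI[OF tendsto_norm_zero[OF LIM_zero[OF tendsto_id_plus_inv]]]) auto
  moreover have "(\<lambda>n. norm (grad (v n) (?x + z) - grad w (?x + z))) \<longlonglongrightarrow> 0"
    by (intro tendsto_norm_zero LIM_zero tendsto_grad_v)
  ultimately show "(\<lambda>n. 1/2 * norm (?xn n - ?x) powr \<gamma> + norm (grad (v n) (?x + z) - grad w (?x + z)))
      \<longlonglongrightarrow> 0"
    by (rule tendsto_add_zero[OF tendsto_mult_right_zero])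
qed

lemma tendsto_drift: "(\<lambda>n. drift \<nu> A \<eta> lam (v n) y) \<longlonglongrightarrow> drift \<nu> A \<eta> lam w y"
proof -
  have "(\<lambda>n. jump_integral \<nu> A (v n) (id_plus_inv (v n) y)) \<longlonglongrightarrow> jump_integral \<nu> A w (id_plus_inv w y)"
    unfolding jump_integral_def
    using tendsto_shift tendsto_shift[of 0] jump_operator.norm_increment_le[OF jump_v]
      jump_operator.borel_measurable_shift[OF jump_v] jump_operator.borel_measurable_shift[OF jump_w]
    by (intro set_integral_dominated_convergence[where c="2 * M"] tendsto_diff borel_measurable_diff) auto
  then show ?thesis
    unfolding drift_def drift_core_def using tendsto_shift[of 0] by (intro tendsto_intros) auto
qed

lemma tendsto_drift_core_deriv:
  assumes "k \<longlonglongrightarrow> k0" and "\<And>n. norm (k n) \<le> K"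
  shows "(\<lambda>n. drift_core_deriv \<nu> A lam (v n) (id_plus_inv (v n) y) (k n))
    \<longlonglongrightarrow> drift_core_deriv \<nu> A lam w (id_plus_inv w y) k0"
proof -
  let ?xn = "\<lambda>n. id_plus_inv (v n) y" and ?x = "id_plus_inv w y"
  have "(\<lambda>n. LINT z:A|\<nu>. blinfun_apply (grad (v n) (?xn n + z)) (k n) - blinfun_apply (grad (v n) (?xn n)) (k n))
      \<longlonglongrightarrow> (LINT z:A|\<nu>. blinfun_apply (grad w (?x + z)) k0 - blinfun_apply (grad w ?x) k0)"
  proof (rule set_integral_dominated_convergence)
    show "(\<lambda>z. blinfun_apply (grad w (?x + z)) k0 - blinfun_apply (grad w ?x) k0) \<in> borel_measurable borel"
      using jump_operator.borel_measurable_grad_shift[OF jump_w] by measurable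
    show "(\<lambda>z. blinfun_apply (grad (v n) (?xn n + z)) (k n) - blinfun_apply (grad (v n) (?xn n)) (k n))
        \<in> borel_measurable borel" for n
      using jump_operator.borel_measurable_grad_shift[OF jump_v] by measurable
    show "(\<lambda>n. blinfun_apply (grad (v n) (?xn n + z)) (k n) - blinfun_apply (grad (v n) (?xn n)) (k n))
        \<longlonglongrightarrow> blinfun_apply (grad w (?x + z)) k0 - blinfun_apply (grad w ?x) k0" for z
      using tendsto_grad_shift[of z] tendsto_grad_shift[of 0] assms(1)
      by (intro tendsto_diff blinfun.tendsto) auto
    show "norm (blinfun_apply (grad (v n) (?xn n + z)) (k n) - blinfun_apply (grad (v n) (?xn n)) (k n)) \<le> K"
      for n z
      using jump_operator.norm_grad_increment_le[OF jump_v, of n "?xn n" z "k n"] assms(2)[of n]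
      by linarith
  qed
  then have "(\<lambda>n. jump_integral_deriv \<nu> A (v n) (?xn n) (k n)) \<longlonglongrightarrow> jump_integral_deriv \<nu> A w ?x k0"
    unfolding jump_integral_deriv_def .
  then show ?thesis
    unfolding drift_core_deriv_def using assms(1) tendsto_grad_shift[of 0]
    by (intro tendsto_intros blinfun.tendsto) auto
qed

lemma tendsto_grad_drift: "(\<lambda>n. grad (drift \<nu> A \<eta> lam (v n)) y) \<longlonglongrightarrow> grad (drift \<nu> A \<eta> lam w) y"
proof (rule tendsto_componentwise1)
  fix h
  let ?Bn = "\<lambda>n. grad (v n) (id_plus_inv (v n) y)" and ?B = "grad w (id_plus_inv w y)"
  have "(\<lambda>n. id_plus_inv (blinfun_apply (?Bn n)) h) \<longlonglongrightarrow> id_plus_inv (blinfun_apply ?B) h"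
  proof (rule tendsto_of_norm_diff_le)
    show "norm (id_plus_inv (blinfun_apply (?Bn n)) h - id_plus_inv (blinfun_apply ?B) h)
        \<le> 4 * norm (?Bn n - ?B) * norm h" for n
      using small_C1_holder.norm_grad_le[OF small_C1_holder_seq] small_C1_holder.norm_grad_le[OF small_C1_holder_lim]
      by (intro id_plus_inv_blinfun_diff)
    show "(\<lambda>n. 4 * norm (?Bn n - ?B) * norm h) \<longlonglongrightarrow> 0"
      using tendsto_grad_shift[of 0] by (intro tendsto_mult_left_zero tendsto_mult_right_zero
          tendsto_norm_zero LIM_zero) simp
  qed
  moreover have "norm (id_plus_inv (blinfun_apply (?Bn n)) h) \<le> 2 * norm h" for n
    using small_C1_holder.norm_grad_le[OF small_C1_holder_seq] by (rule norm_id_plus_inv_blinfun_le)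
  ultimately show "(\<lambda>n. blinfun_apply (grad (drift \<nu> A \<eta> lam (v n)) y) h)
      \<longlonglongrightarrow> blinfun_apply (grad (drift \<nu> A \<eta> lam w) y) h"
    unfolding jump_operator.grad_drift[OF jump_v lam_nonneg] jump_operator.grad_drift[OF jump_w lam_nonneg]
      drift_deriv_def
    by (rule tendsto_drift_core_deriv)
qed

end

end

section \<open>The coefficients \<open>a\<^sup>n\<close>\<close>

lemma acoef_eq_drift: "acoef \<nu> \<eta> lam r0 u n s = drift \<nu> {z. r0 \<le> norm z} \<eta> lam (u n s)"
proof -
  have "Phi u n s = (\<lambda>x. x + u n s x)" by (simp add: Phi_def fun_eq_iff)
  then show ?thesis
    by (intro ext) (simp add: acoef_def drift_def drift_core_def jump_integral_def id_plus_inv_def)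
qed

lemma acoef_estimates:
  fixes \<nu> :: "'a::euclidean_space measure" and \<eta> :: 'a
  assumes "levy_measure \<nu>" and "0 < r0" and "0 \<le> lam"
    and "small_C1_holder \<gamma> (u n s)" and "\<And>x. norm (u n s x) \<le> M"
  defines "C \<equiv> 1 + norm \<eta> + 5 * lam + 10 * measure \<nu> {z. r0 \<le> norm z}"
  shows "(\<forall>y. acoef \<nu> \<eta> lam r0 u n s differentiable (at y))
    \<and> holder_norm_le \<gamma> (grad (acoef \<nu> \<eta> lam r0 u n s)) C
    \<and> (\<forall>y. norm (acoef \<nu> \<eta> lam r0 u n s y) \<le> C * (1 + M))"
proof -
  interpret jump_operator \<nu> "{z. r0 \<le> norm z}" \<gamma> "u n s" M
    using finite_set_measure_levy[OF assms(1,2)] assms(4,5)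
    by (simp add: jump_operator_def jump_operator_axioms_def)
  let ?\<mu> = "measure \<nu> {z. r0 \<le> norm z}"
  have "norm (drift \<nu> {z. r0 \<le> norm z} \<eta> lam (u n s) y) \<le> C * (1 + M)" for y
  proof -
    have "norm \<eta> + lam * M + 2 * M * ?\<mu> \<le> (norm \<eta> + lam + 2 * ?\<mu>) * (1 + M)"
      using assms(3) bound_nonneg by (simp add: algebra_simps)
    also have "\<dots> \<le> C * (1 + M)"
      unfolding C_def using assms(3) bound_nonneg by (intro mult_right_mono) auto
    finally show ?thesis using norm_drift_le[OF assms(3)] order_trans by blast
  qed
  moreover have "holder_norm_le \<gamma> (grad (drift \<nu> {z. r0 \<le> norm z} \<eta> lam (u n s))) C"
    using holder_norm_le_grad_drift[OF assms(3)] by (rule holder_norm_le_mono) (simp add: C_def)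
  ultimately show ?thesis
    unfolding acoef_eq_drift using has_derivative_drift[OF assms(3)] by (blast intro: differentiableI)
qed

lemma acoef_convergence:
  fixes \<nu> :: "'a::euclidean_space measure" and u :: "enat \<Rightarrow> real \<Rightarrow> 'a \<Rightarrow> 'a"
  assumes "levy_measure \<nu>" and "0 < r0" and "0 \<le> lam"
    and "\<And>n. small_C1_holder \<gamma> (u n t)" and "\<And>n x. norm (u n t x) \<le> M"
    and "\<And>x. (\<lambda>n. u (enat n) t x) \<longlonglongrightarrow> u \<infinity> t x"
    and "\<And>x. (\<lambda>n. grad (u (enat n) t) x) \<longlonglongrightarrow> grad (u \<infinity> t) x"
  shows "(\<lambda>n. acoef \<nu> \<eta> lam r0 u (enat n) t y) \<longlonglongrightarrow> acoef \<nu> \<eta> lam r0 u \<infinity> t y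
    \<and> (\<lambda>n. grad (acoef \<nu> \<eta> lam r0 u (enat n) t) y) \<longlonglongrightarrow> grad (acoef \<nu> \<eta> lam r0 u \<infinity> t) y"
proof -
  interpret finite_set_measure \<nu> "{z. r0 \<le> norm z}"
    using finite_set_measure_levy[OF assms(1,2)] .
  have jump: "jump_operator \<nu> {z. r0 \<le> norm z} \<gamma> (u n t) M" for n
    using assms(4,5) by (simp add: jump_operator_def jump_operator_axioms_def finite_set_measure_axioms)
  show ?thesis
    unfolding acoef_eq_drift using jump assms(3,6,7)
    by (intro conjI tendsto_drift[where v="\<lambda>n. u (enat n) t" and w="u \<infinity> t"]
        tendsto_grad_drift[where v="\<lambda>n. u (enat n) t" and w="u \<infinity> t"])
qed

lemma acoef_regularity:
  fixes \<nu> :: "'a::euclidean_space measure" and \<eta> :: 'a and u :: "enat \<Rightarrow> real \<Rightarrow> 'a \<Rightarrow> 'a"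
  assumes "levy_measure \<nu>" and "0 < \<gamma>" and "\<gamma> \<le> 1" and "0 \<le> lam" and "0 < r0"
    and "\<forall>n. \<forall>t\<in>{0..1}. (\<forall>x. u n t differentiable (at x)) \<and> continuous_on UNIV (grad (u n t))"
    and "\<forall>n. \<forall>t\<in>{0..1}. \<forall>x. norm (u n t x) \<le> M"
    and "\<forall>n. \<forall>t\<in>{0..1}. holder_norm_le \<gamma> (grad (u n t)) (1/2)"
    and locally_uniform: "\<forall>R>0. \<forall>e>0. \<forall>\<^sub>F n in sequentially. \<forall>t\<in>{0..1}. \<forall>x. norm x \<le> R \<longrightarrow>
          norm (u (enat n) t x - u \<infinity> t x) \<le> e \<and> norm (grad (u (enat n) t) x - grad (u \<infinity> t) x) \<le> e"
  defines "C \<equiv> 1 + norm \<eta> + 5 * lam + 10 * measure \<nu> {z. r0 \<le> norm z}"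
  shows "(\<forall>n. \<forall>s\<in>{0..1}. (\<forall>y. acoef \<nu> \<eta> lam r0 u n s differentiable (at y))
        \<and> holder_norm_le \<gamma> (grad (acoef \<nu> \<eta> lam r0 u n s)) C
        \<and> (\<forall>y. norm (acoef \<nu> \<eta> lam r0 u n s y) \<le> C * (1 + M)))
    \<and> (\<forall>t\<in>{0..1}. \<forall>y.
        (\<lambda>n. acoef \<nu> \<eta> lam r0 u (enat n) t y) \<longlonglongrightarrow> acoef \<nu> \<eta> lam r0 u \<infinity> t y
        \<and> (\<lambda>n. grad (acoef \<nu> \<eta> lam r0 u (enat n) t) y) \<longlonglongrightarrow> grad (acoef \<nu> \<eta> lam r0 u \<infinity> t) y)"
proof (rule conjI; intro allI ballI)
  have C1: "small_C1_holder \<gamma> (u n t)" if "t \<in> {0..1}" for n t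
    using assms(2,3,6,8) that by (intro small_C1_holderI) auto
  show "(\<forall>y. acoef \<nu> \<eta> lam r0 u n s differentiable (at y))
      \<and> holder_norm_le \<gamma> (grad (acoef \<nu> \<eta> lam r0 u n s)) C
      \<and> (\<forall>y. norm (acoef \<nu> \<eta> lam r0 u n s y) \<le> C * (1 + M))" if "s \<in> {0..1}" for n s
    unfolding C_def using assms(1,4,5,7) C1 that by (intro acoef_estimates) auto
  show "(\<lambda>n. acoef \<nu> \<eta> lam r0 u (enat n) t y) \<longlonglongrightarrow> acoef \<nu> \<eta> lam r0 u \<infinity> t y
      \<and> (\<lambda>n. grad (acoef \<nu> \<eta> lam r0 u (enat n) t) y) \<longlonglongrightarrow> grad (acoef \<nu> \<eta> lam r0 u \<infinity> t) y"
    if t: "t \<in> {0..1}" for t y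
  proof -
    have "\<forall>\<^sub>F n in sequentially. norm (u (enat n) t x - u \<infinity> t x) \<le> e
        \<and> norm (grad (u (enat n) t) x - grad (u \<infinity> t) x) \<le> e" if "0 < e" for x e
      using locally_uniform[rule_format, of "norm x + 1" e] that t
      by (simp add: add_nonneg_pos) (auto elim: eventually_mono)
    then have "(\<lambda>n. u (enat n) t x) \<longlonglongrightarrow> u \<infinity> t x" "(\<lambda>n. grad (u (enat n) t) x) \<longlonglongrightarrow> grad (u \<infinity> t) x"
      for x by (auto intro!: tendsto_of_eventually_norm_diff_le simp: eventually_conj_iff)
    then show ?thesis
      using assms(1,4,5,7) C1[OF t] t by (intro acoef_convergence[where M=M]) auto
  qed
qed

theorem lemma3p3:
  fixes \<nu> :: "'a::euclidean_space measure" and \<eta> :: 'a and lam \<gamma> r0 :: real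
  assumes "levy_measure \<nu>" and "0 < \<gamma>" and "\<gamma> < 1" and "0 \<le> lam"
    and "0 < r0" and "r0 < 1"
  shows "\<exists>C2>0. \<forall>(b :: real \<Rightarrow> 'a \<Rightarrow> 'a) (u :: enat \<Rightarrow> real \<Rightarrow> 'a \<Rightarrow> 'a) (C0::real).
    ( (\<lambda>p. b (fst p) (snd p)) \<in> borel_measurable borel
    \<and> (\<exists>M. \<forall>t\<in>{0..1}. \<forall>x. norm (b t x) \<le> M)
    \<and> (\<forall>n. \<forall>t\<in>{0..1}. (\<forall>x. u n t differentiable (at x)) \<and> continuous_on UNIV (grad (u n t)))
    \<and> (\<forall>n. \<forall>t\<in>{0..1}. \<forall>x. norm (u n t x) \<le> (SUP t'\<in>{0..1}. SUP x'. norm (b t' x')))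
    \<and> (\<forall>n. \<forall>t\<in>{0..1}. holder_norm_le \<gamma> (grad (u n t)) (1/2))
    \<and> (\<forall>R>0. \<forall>e>0. \<forall>\<^sub>F n in sequentially. \<forall>t\<in>{0..1}. \<forall>x. norm x \<le> R \<longrightarrow>
          norm (u (enat n) t x - u \<infinity> t x) \<le> e \<and>
          norm (grad (u (enat n) t) x - grad (u \<infinity> t) x) \<le> e)
    \<and> 0 < C0
    \<and> (\<forall>n. \<forall>s\<in>{0..1}. \<forall>z y. (\<lambda>y'. gfun u n s y' z) differentiable (at y) \<and>
          norm (grad (\<lambda>y'. gfun u n s y' z) y) \<le> C0 * min 1 (norm z powr \<gamma>))
    \<and> C0 * r0 powr \<gamma> + 3 * r0 / 2 < 1 )
    \<longrightarrow>
    ( (\<forall>n. \<forall>s\<in>{0..1}.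
          (\<forall>y. acoef \<nu> \<eta> lam r0 u n s differentiable (at y))
        \<and> holder_norm_le \<gamma> (grad (acoef \<nu> \<eta> lam r0 u n s)) C2
        \<and> (\<forall>y. norm (acoef \<nu> \<eta> lam r0 u n s y)
               \<le> C2 * (1 + (SUP t\<in>{0..1}. SUP x. norm (b t x)))))
    \<and> (\<forall>t\<in>{0..1}. \<forall>y.
          (\<lambda>n. acoef \<nu> \<eta> lam r0 u (enat n) t y) \<longlonglongrightarrow> acoef \<nu> \<eta> lam r0 u \<infinity> t y
        \<and> (\<lambda>n. grad (acoef \<nu> \<eta> lam r0 u (enat n) t) y) \<longlonglongrightarrow> grad (acoef \<nu> \<eta> lam r0 u \<infinity> t) y))"
proof -
  let ?C2 = "1 + norm \<eta> + 5 * lam + 10 * measure \<nu> {z. r0 \<le> norm z}"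
  have "0 < ?C2" using assms(4) by (simp add: add_pos_nonneg)
  text \<open>Only the bound of \<open>u\<^sup>n\<close> by \<open>sup |b|\<close> enters.\<close>
  show ?thesis
    by (intro exI[of _ ?C2] conjI[OF \<open>0 < ?C2\<close>] allI impI, elim conjE,
        rule acoef_regularity[OF assms(1,2) less_imp_le[OF assms(3)] assms(4,5)]) assumption+
qed

end
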